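(* Let $n\ge1$ and let $\mathcal{A}\subset[0,1]^n$ be Lebesgue measurable with $\mathrm{vol}[\mathcal{A}]>0$. For $p\ge0$ let $d_p$ be the distance $d_p(x,y)=\|x-y\|_p$, where $\|z\|_p=(\sum_i|z_i|^p)^{1/p}$ for $p>0$ and $\|z\|_0=\#\{i: z_i\ne0\}$. For $\epsilon\ge0$ let $\mathcal{A}(\epsilon,d_p)=\{x\in[0,1]^n: d_p(x,y)\le\epsilon\text{ for some }y\in\mathcal{A}\}$. Then $$\mathrm{vol}[\mathcal{A}(\epsilon,d_p)]\ge1-\frac{\exp(-\epsilon^{2p}/n)}{\mathrm{vol}[\mathcal{A}]}\quad\text{for }p>0,$$ and $$\mathrm{vol}[\mathcal{A}(\epsilon,d_0)]\ge1-\frac{\exp(-\epsilon^{2}/n)}{\mathrm{vol}[\mathcal{A}]}\quad\text{for }p=0.$$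
   Context: $\mathrm{vol}$ denotes $n$-dimensional Lebesgue measure. *)

theory Defs
  imports "HOL-Analysis.Analysis"
begin

definition unit_cube :: "(real ^ 'n) set" where
  "unit_cube = {x. \<forall>i. 0 \<le> x $ i \<and> x $ i \<le> 1}"

definition pnorm :: "real \<Rightarrow> real ^ 'n \<Rightarrow> real" where
  "pnorm p z = (if p = 0 then real (card {i. z $ i \<noteq> 0})
                else (\<Sum>i\<in>UNIV. \<bar>z $ i\<bar> powr p) powr (1 / p))"

definition dist_p :: "real \<Rightarrow> real ^ 'n \<Rightarrow> real ^ 'n \<Rightarrow> real" where
  "dist_p p x y = pnorm p (x - y)"

definition expansion :: "(real ^ 'n) set \<Rightarrow> real \<Rightarrow> real \<Rightarrow> (real ^ 'n) set" where
  "expansion A eps p = {x \<in> unit_cube. \<exists>y\<in>A. dist_p p x y \<le> eps}"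

end

(*
  The argument goes through the Hamming distance d. For compact K in the cube and l \<ge> 0,
  Talagrand's inequality  \<integral> exp (l * d(x, K)) dx \<le> c(l)^n / vol K,  with
  c(l) = (1 + e^l)^2 / (4 e^l) \<le> exp (l^2 / 4), is proved by induction on the coordinates:
  a point reaches K either within the section of K at its last coordinate t, or, at the cost
  of one more changed coordinate, within the projection of K along that coordinate. Both
  bounds are interpolated linearly in the measure a(t) of the section and integrated over t.
  Markov's inequality with l = 2 s / n then shows that the Hamming s-neighbourhood of K misses
  at most exp (- s^2 / n) / vol K of the cube, and inner regularity passes to measurable A.
  Finally, coordinates of points of the cube differ by at most 1, so a point at Hamming distance
  at most eps^p (resp. eps) from A is at d_p-distance at most eps from A.
*)

theory Submission
  imports Defs "HOL-Probability.Hoeffding"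
begin

section \<open>Hamming neighbourhoods in the cube\<close>

definition vec_override :: "real ^ 'n \<Rightarrow> ('n \<Rightarrow> real) \<Rightarrow> 'n set \<Rightarrow> real ^ 'n" where
  "vec_override x f J = (\<chi> j. if j \<in> J then f j else x $ j)"

definition vec_upd :: "real ^ 'n \<Rightarrow> 'n \<Rightarrow> real \<Rightarrow> real ^ 'n" where
  "vec_upd x i t = (\<chi> j. if j = i then t else x $ j)"

lemma vec_override_UNIV: "vec_override x f UNIV = vec_lambda f"
  by (simp add: vec_override_def)

lemma vec_override_insert:
  "i \<notin> J \<Longrightarrow> vec_override x (f(i := t)) (insert i J) = vec_override (vec_upd x i t) f J"
  by (auto simp: vec_override_def vec_upd_def vec_eq_iff)

lemma borel_measurable_vec_lambda:
  fixes f :: "'a \<Rightarrow> 'n::finite \<Rightarrow> real"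
  assumes "\<And>j. (\<lambda>x. f x j) \<in> borel_measurable M"
  shows "(\<lambda>x. vec_lambda (f x)) \<in> borel_measurable M"
  by (subst borel_measurable_euclidean_space)
     (auto simp: Basis_vec_def cart_eq_inner_axis[symmetric] assms)

lemma measurable_vec_override [measurable]:
  assumes "\<And>j. j \<in> J \<Longrightarrow> sets (N j) = sets borel"
  shows "(\<lambda>f. vec_override x f J) \<in> borel_measurable (PiM J N)"
  unfolding vec_override_def
proof (intro borel_measurable_vec_lambda)
  fix j
  show "(\<lambda>f. if j \<in> J then f j else x $ j) \<in> borel_measurable (PiM J N)"
  proof (cases "j \<in> J")
    case True
    have "(\<lambda>f. f j) \<in> measurable (PiM J N) (N j)"
      by (rule measurable_component_singleton[OF True])
    then show ?thesis
      using True by (simp add: measurable_cong_sets[OF refl assms[OF True]])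
  qed simp
qed

lemma unit_cube_eq_cbox: "unit_cube = cbox 0 1"
  by (auto simp: unit_cube_def mem_box_cart)

lemma compact_unit_cube: "compact unit_cube"
  by (simp add: unit_cube_eq_cbox)

lemma measure_unit_cube: "measure lborel (unit_cube :: (real ^ 'n::finite) set) = 1"
  by (simp add: unit_cube_eq_cbox content_cbox_cart interval_ne_empty_cart)

definition cylinder :: "(real ^ 'n) set \<Rightarrow> 'n set \<Rightarrow> (real ^ 'n) set" where
  "cylinder K S = {z. \<exists>y\<in>K. \<forall>j. j \<notin> S \<longrightarrow> y $ j = z $ j}"

lemma cylinder_empty [simp]: "cylinder K {} = K"
  by (auto simp: cylinder_def vec_eq_iff[symmetric])

lemma subset_cylinder: "K \<subseteq> cylinder K S"
  by (auto simp: cylinder_def)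

lemma cylinder_mono: "K \<subseteq> K' \<Longrightarrow> S \<subseteq> S' \<Longrightarrow> cylinder K S \<subseteq> cylinder K' S'"
  unfolding cylinder_def by blast

lemma cylinder_cylinder: "cylinder (cylinder K S) S' = cylinder K (S \<union> S')"
proof (intro set_eqI iffI)
  fix z assume "z \<in> cylinder (cylinder K S) S'"
  then obtain w y where "y \<in> K" "\<forall>j. j \<notin> S \<longrightarrow> y $ j = w $ j" "\<forall>j. j \<notin> S' \<longrightarrow> w $ j = z $ j"
    by (auto simp: cylinder_def)
  then show "z \<in> cylinder K (S \<union> S')"
    unfolding cylinder_def by (auto intro!: bexI[of _ y])
next
  fix z assume "z \<in> cylinder K (S \<union> S')"
  then obtain y where y: "y \<in> K" "\<forall>j. j \<notin> S \<union> S' \<longrightarrow> y $ j = z $ j"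
    by (auto simp: cylinder_def)
  define w where "w = (\<chi> j. if j \<in> S' then y $ j else z $ j)"
  have "w \<in> cylinder K S" using y by (auto simp: cylinder_def w_def)
  moreover have "\<forall>j. j \<notin> S' \<longrightarrow> w $ j = z $ j" by (simp add: w_def)
  ultimately show "z \<in> cylinder (cylinder K S) S'"
    unfolding cylinder_def[of _ S'] by blast
qed

lemma mem_cylinder_cong:
  "(\<And>j. j \<notin> S \<Longrightarrow> z $ j = w $ j) \<Longrightarrow> z \<in> cylinder K S \<longleftrightarrow> w \<in> cylinder K S"
  by (auto simp: cylinder_def)

lemma closed_cylinder:
  fixes K :: "(real ^ 'n) set"
  assumes "compact K"
  shows "closed (cylinder K S)"
proof -
  define proj :: "real ^ 'n \<Rightarrow> real ^ 'n" where "proj z = (\<chi> j. if j \<in> S then 0 else z $ j)" for z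
  have proj_eq: "proj z = proj y \<longleftrightarrow> (\<forall>j. j \<notin> S \<longrightarrow> y $ j = z $ j)" for y z
    by (auto simp: proj_def vec_eq_iff)
  have cont: "continuous_on UNIV proj"
    unfolding proj_def
  proof (intro continuous_on_vec_lambda)
    show "continuous_on UNIV (\<lambda>z. if j \<in> S then 0 else z $ j)" for j
      by (cases "j \<in> S") (auto intro!: continuous_intros)
  qed
  have "cylinder K S = proj -` (proj ` K)"
    by (auto simp: cylinder_def proj_eq) (metis proj_eq)
  also have "closed \<dots>"
    using assms cont continuous_on_subset[OF cont]
    by (intro continuous_closed_vimage compact_imp_closed compact_continuous_image)
       (auto simp: continuous_on_eq_continuous_at)
  finally show ?thesis .
qed

lemma compact_cylinder_Int_unit_cube: "compact K \<Longrightarrow> compact (cylinder K S \<inter> unit_cube)"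
  by (intro closed_Int_compact closed_cylinder compact_unit_cube)

definition hamming_nbhd :: "(real ^ 'n) set \<Rightarrow> real \<Rightarrow> (real ^ 'n) set" where
  "hamming_nbhd K s = (\<Union>S\<in>{S. real (card S) \<le> s}. cylinder K S)"

lemma hamming_nbhd_mono: "K \<subseteq> K' \<Longrightarrow> hamming_nbhd K s \<subseteq> hamming_nbhd K' s"
  unfolding hamming_nbhd_def using cylinder_mono[of K K'] by blast

lemma hamming_nbhd_0: "hamming_nbhd K 0 = (K :: (real ^ 'n::finite) set)"
  by (auto simp: hamming_nbhd_def intro: bexI[of _ "{}"])

lemma hamming_nbhdE:
  assumes "z \<in> hamming_nbhd K s"
  obtains y where "y \<in> K" "real (card {j. z $ j \<noteq> y $ j}) \<le> s"
proof -
  obtain S y where "real (card S) \<le> s" "y \<in> K" "\<forall>j. j \<notin> S \<longrightarrow> y $ j = z $ j"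
    using assms by (auto simp: hamming_nbhd_def cylinder_def)
  moreover from this have "card {j. z $ j \<noteq> y $ j} \<le> card S"
    by (intro card_mono) auto
  ultimately show ?thesis
    using that by force
qed

lemma closed_hamming_nbhd: "compact K \<Longrightarrow> closed (hamming_nbhd K s)"
  unfolding hamming_nbhd_def by (auto intro!: closed_UN closed_cylinder)

(* exp (l * d), where d is the least number of coordinates in J that must be changed to move z
   into K, and \<infinity> if z differs from every point of K outside J. *)
definition exp_hamming :: "real \<Rightarrow> (real ^ 'n) set \<Rightarrow> 'n set \<Rightarrow> real ^ 'n \<Rightarrow> ennreal" where
  "exp_hamming l K J z =
     (INF S\<in>Pow J. if z \<in> cylinder K S then ennreal (exp (l * real (card S))) else \<infinity>)"

lemma exp_hamming_empty: "exp_hamming l K {} z = (if z \<in> K then 1 else \<infinity>)"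
  by (simp add: exp_hamming_def)

lemma exp_hamming_antimono: "J \<subseteq> J' \<Longrightarrow> exp_hamming l K J' z \<le> exp_hamming l K J z"
  unfolding exp_hamming_def by (rule INF_superset_mono) auto

lemma exp_hamming_attained:
  assumes "finite J"
  obtains S where "S \<subseteq> J"
    "exp_hamming l K J z = (if z \<in> cylinder K S then ennreal (exp (l * real (card S))) else \<infinity>)"
proof -
  define h where "h S = (if z \<in> cylinder K S then ennreal (exp (l * real (card S))) else \<infinity>)" for S
  have fin: "finite (h ` Pow J)" "h ` Pow J \<noteq> {}"
    using assms by auto
  have "exp_hamming l K J z = Min (h ` Pow J)"
    unfolding exp_hamming_def h_def[symmetric] using Min_Inf[OF fin] by simp
  with Min_in[OF fin] that show ?thesis
    unfolding h_def by auto
qed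

lemma exp_hamming_insert_le:
  assumes "finite J" "i \<notin> J"
  shows "exp_hamming l K (insert i J) z \<le> ennreal (exp l) * exp_hamming l (cylinder K {i} \<inter> unit_cube) J z"
proof -
  obtain S where S: "S \<subseteq> J" and eq: "exp_hamming l (cylinder K {i} \<inter> unit_cube) J z
      = (if z \<in> cylinder (cylinder K {i} \<inter> unit_cube) S then ennreal (exp (l * real (card S))) else \<infinity>)"
    using exp_hamming_attained[OF assms(1)] .
  have card: "card (insert i S) = Suc (card S)"
    using S assms by (intro card_insert_disjoint) (auto intro: finite_subset)
  show ?thesis
  proof (cases "z \<in> cylinder (cylinder K {i} \<inter> unit_cube) S")
    case True
    then have "z \<in> cylinder K (insert i S)"
      using cylinder_mono[of "cylinder K {i} \<inter> unit_cube" "cylinder K {i}" S S]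
      by (auto simp: cylinder_cylinder)
    then have "exp_hamming l K (insert i J) z \<le> ennreal (exp (l * real (card (insert i S))))"
      unfolding exp_hamming_def using S by (intro INF_lower2[of "insert i S"]) auto
    also have "\<dots> = ennreal (exp l * exp (l * real (card S)))"
      using card by (simp add: distrib_left mult_exp_exp)
    also have "\<dots> = ennreal (exp l) * ennreal (exp (l * real (card S)))"
      by (rule ennreal_mult) auto
    finally show ?thesis
      using True eq by simp
  qed (simp add: eq ennreal_mult_top)
qed

lemma exp_hamming_outside_hamming_nbhd:
  fixes K :: "(real ^ 'n) set"
  assumes "0 \<le> l" "z \<notin> hamming_nbhd K s"
  shows "ennreal (exp (l * s)) \<le> exp_hamming l K UNIV z"
  unfolding exp_hamming_def
proof (rule INF_greatest)
  fix S :: "'n set"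
  show "ennreal (exp (l * s)) \<le> (if z \<in> cylinder K S then ennreal (exp (l * real (card S))) else \<infinity>)"
  proof (cases "z \<in> cylinder K S")
    case True
    then have "s < real (card S)"
      using assms(2) not_le by (fastforce simp: hamming_nbhd_def)
    then have "exp (l * s) \<le> exp (l * real (card S))"
      using assms(1) by (simp add: mult_left_mono)
    then show ?thesis
      using True by (simp add: ennreal_leI)
  qed simp
qed

lemma borel_measurable_exp_hamming [measurable]:
  "compact K \<Longrightarrow> exp_hamming l K J \<in> borel_measurable borel"
  unfolding exp_hamming_def
  by (intro borel_measurable_INF measurable_If_set) (auto intro!: borel_closed closed_cylinder)

section \<open>Talagrand's inequality for the Hamming distance\<close>

(* The maximum over m of (1 + e^l) m - e^l m^2 (see affine_quadratic_le). *)
definition talagrand_factor :: "real \<Rightarrow> real" where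
  "talagrand_factor l = (1 + exp l)\<^sup>2 / (4 * exp l)"

lemma talagrand_factor_nonneg: "0 \<le> talagrand_factor l"
  by (simp add: talagrand_factor_def)

lemma talagrand_factor_le_exp:
  assumes "0 \<le> l"
  shows "talagrand_factor l \<le> exp (l\<^sup>2 / 4)"
proof -
  have eq: "1 + 1 / 2 * (exp l - 1) = (1 + exp l) / 2"
    by (simp add: field_simps)
  have "ln ((1 + exp l) / 2) \<le> l / 2 + l\<^sup>2 / 8"
    using Hoeffdings_lemma_aux[of l "1/2"] assms unfolding eq by simp
  have "(1 + exp l) / 2 = exp (ln ((1 + exp l) / 2))"
    by (simp add: add_pos_pos)
  also have "\<dots> \<le> exp (l / 2 + l\<^sup>2 / 8)"
    using \<open>ln ((1 + exp l) / 2) \<le> _\<close> by simp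
  finally have "((1 + exp l) / 2)\<^sup>2 \<le> (exp (l / 2 + l\<^sup>2 / 8))\<^sup>2"
    by (intro power_mono) (auto simp: add_nonneg_nonneg)
  also have "\<dots> = exp l * exp (l\<^sup>2 / 4)"
    by (simp add: power2_eq_square mult_exp_exp exp_add[symmetric])
  finally show ?thesis
    by (simp add: talagrand_factor_def field_simps power2_eq_square)
qed

lemma talagrand_factor_power_le:
  assumes "0 \<le> s" "0 < n"
  shows "talagrand_factor (2 * s / n) ^ n * exp (- (2 * s / n) * s) \<le> exp (- (s\<^sup>2) / n)"
proof -
  define l where "l = 2 * s / n"
  have "talagrand_factor l ^ n \<le> exp (l\<^sup>2 / 4) ^ n"
    using assms talagrand_factor_le_exp[of l] talagrand_factor_nonneg
    by (intro power_mono) (auto simp: l_def)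
  also have "\<dots> = exp (n * (l\<^sup>2 / 4))"
    by (rule exp_of_nat_mult[symmetric])
  finally have "talagrand_factor l ^ n * exp (- l * s) \<le> exp (n * (l\<^sup>2 / 4)) * exp (- l * s)"
    by (rule mult_right_mono) simp
  also have "\<dots> = exp (n * (l\<^sup>2 / 4) - l * s)"
    by (simp add: mult_exp_exp)
  also have "n * (l\<^sup>2 / 4) - l * s = - (s\<^sup>2) / n"
    using assms by (simp add: l_def power2_eq_square field_simps)
  finally show ?thesis
    by (simp add: l_def)
qed

lemma min_le_affine:
  fixes g E :: real
  assumes "0 \<le> g" "g \<le> 1" "0 < E"
  shows "E \<le> 1 + E - E * g \<or> (0 < g \<and> 1 / g \<le> 1 + E - E * g)"
proof (cases "E * g \<le> 1")
  case False
  then have "0 < g"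
    using assms by (cases "g = 0") auto
  have "0 \<le> (1 - g) * (E * g - 1)"
    using False assms by simp
  then have "1 \<le> g * (1 + E - E * g)"
    by (simp add: algebra_simps)
  then show ?thesis
    using \<open>0 < g\<close> by (simp add: field_simps)
qed simp

lemma affine_quadratic_le:
  fixes E m :: real
  assumes "0 < E"
  shows "(1 + E) * m - E * m\<^sup>2 \<le> (1 + E)\<^sup>2 / (4 * E)"
proof -
  have "0 \<le> (2 * E * m - (1 + E))\<^sup>2"
    by simp
  then have "4 * E * ((1 + E) * m - E * m\<^sup>2) \<le> (1 + E)\<^sup>2"
    by (simp add: power2_eq_square algebra_simps)
  then show ?thesis
    using assms by (simp add: field_simps)
qed

lemma one_minus_inverse_le:
  fixes a :: real
  assumes "0 < a"
  shows "1 - 1 / a \<le> a"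
proof -
  have "0 \<le> (a - 1)\<^sup>2"
    by simp
  then have "a - 1 \<le> a * a"
    using assms by (simp add: power2_eq_square algebra_simps)
  then show ?thesis
    using assms by (simp add: field_simps)
qed

lemma le_affine_interpolation:
  fixes a \<beta> C E :: real and g :: ennreal
  assumes a: "0 \<le> a" "a \<le> \<beta>" and "0 < \<beta>" "0 \<le> C" "0 < E"
    and g: "g \<le> ennreal (E * C / \<beta>)" "0 < a \<Longrightarrow> g \<le> ennreal (C / a)"
  shows "g \<le> ennreal (C / \<beta> * (1 + E - E * (a / \<beta>)))"
proof -
  have "0 \<le> a / \<beta>" "a / \<beta> \<le> 1"
    using a \<open>0 < \<beta>\<close> by auto
  from min_le_affine[OF this \<open>0 < E\<close>] show ?thesis
  proof (elim disjE conjE)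
    assume "E \<le> 1 + E - E * (a / \<beta>)"
    then have "C / \<beta> * E \<le> C / \<beta> * (1 + E - E * (a / \<beta>))"
      by (rule mult_left_mono) (use \<open>0 < \<beta>\<close> \<open>0 \<le> C\<close> in simp)
    then have "ennreal (E * C / \<beta>) \<le> ennreal (C / \<beta> * (1 + E - E * (a / \<beta>)))"
      by (intro ennreal_leI) (simp add: mult.commute)
    with g(1) show ?thesis
      by (rule order_trans)
  next
    assume g': "0 < a / \<beta>" "1 / (a / \<beta>) \<le> 1 + E - E * (a / \<beta>)"
    have "C / \<beta> * (1 / (a / \<beta>)) \<le> C / \<beta> * (1 + E - E * (a / \<beta>))"
      by (rule mult_left_mono[OF g'(2)]) (use \<open>0 < \<beta>\<close> \<open>0 \<le> C\<close> in simp)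
    moreover have "C / \<beta> * (1 / (a / \<beta>)) = C / a"
      using \<open>0 < \<beta>\<close> by simp
    ultimately have "ennreal (C / a) \<le> ennreal (C / \<beta> * (1 + E - E * (a / \<beta>)))"
      by (intro ennreal_leI) linarith
    moreover have "0 < a"
      using g' \<open>0 < \<beta>\<close> by (simp add: zero_less_divide_iff)
    ultimately show ?thesis
      using g(2) order_trans by blast
  qed
qed

lemma (in prob_space) nn_integral_le_talagrand_factor:
  fixes a :: "'a \<Rightarrow> real" and g :: "'a \<Rightarrow> ennreal"
  assumes a: "a \<in> borel_measurable M" "AE t in M. 0 \<le> a t \<and> a t \<le> \<beta>"
    and pos: "0 < expectation a" and "0 \<le> C"
    and g_le: "AE t in M. g t \<le> ennreal (exp l * C / \<beta>)"
    and g_le': "AE t in M. 0 < a t \<longrightarrow> g t \<le> ennreal (C / a t)"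
  shows "(\<integral>\<^sup>+t. g t \<partial>M) \<le> ennreal (talagrand_factor l * C / expectation a)"
proof -
  define E where "E = exp l"
  define \<mu> where "\<mu> = expectation a"
  (* \<psi> bounds g and is affine in a, so its integral only involves the expectation of a. *)
  define \<psi> where "\<psi> t = C / \<beta> * (1 + E - E * (a t / \<beta>))" for t
  have E: "0 < E"
    by (simp add: E_def)
  have a_int: "integrable M a"
    using a by (intro integrable_const_bound[where B = \<beta>]) auto
  have "\<mu> \<le> \<beta>"
    unfolding \<mu>_def using a by (intro integral_le_const a_int) auto
  then have \<beta>: "0 < \<beta>"
    using pos by (simp add: \<mu>_def)
  have \<psi>: "AE t in M. g t \<le> ennreal (\<psi> t) \<and> 0 \<le> \<psi> t"
    using a(2) g_le g_le'
  proof eventually_elim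
    case (elim t)
    have "E * (a t / \<beta>) \<le> E"
      by (rule mult_left_le) (use elim(1) \<beta> E in auto)
    then have "0 \<le> \<psi> t"
      unfolding \<psi>_def using \<beta> \<open>0 \<le> C\<close> by (intro mult_nonneg_nonneg) auto
    moreover have "g t \<le> ennreal (\<psi> t)"
      unfolding \<psi>_def using elim \<beta> E \<open>0 \<le> C\<close> by (intro le_affine_interpolation) (auto simp: E_def)
    ultimately show ?case
      by simp
  qed
  then have "(\<integral>\<^sup>+t. g t \<partial>M) \<le> (\<integral>\<^sup>+t. ennreal (\<psi> t) \<partial>M)"
    by (intro nn_integral_mono_AE) auto
  also have "\<dots> = ennreal (\<integral>t. \<psi> t \<partial>M)"
    using \<psi> a_int by (intro nn_integral_eq_integral) (auto simp: \<psi>_def)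
  also have "(\<integral>t. \<psi> t \<partial>M) = C / \<mu> * ((1 + E) * (\<mu> / \<beta>) - E * (\<mu> / \<beta>)\<^sup>2)"
    using a_int \<beta> pos by (simp add: \<psi>_def \<mu>_def prob_space field_simps power2_eq_square)
  also have "ennreal (C / \<mu> * ((1 + E) * (\<mu> / \<beta>) - E * (\<mu> / \<beta>)\<^sup>2))
      \<le> ennreal (C / \<mu> * ((1 + E)\<^sup>2 / (4 * E)))"
    using pos \<open>0 \<le> C\<close> by (intro ennreal_leI mult_left_mono affine_quadratic_le E) (simp add: \<mu>_def)
  also have "C / \<mu> * ((1 + E)\<^sup>2 / (4 * E)) = talagrand_factor l * C / expectation a"
    by (simp add: talagrand_factor_def E_def \<mu>_def ac_simps)
  finally show ?thesis .
qed

(* The coordinates outside J are frozen at those of x, so sections stay in the Euclidean space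
   real ^ 'n, where cylinders over compact sets are closed and hence measurable. *)
definition slice :: "(real ^ 'n) set \<Rightarrow> real ^ 'n \<Rightarrow> 'n set \<Rightarrow> ('n \<Rightarrow> real) set" where
  "slice K x J = {f \<in> J \<rightarrow>\<^sub>E UNIV. vec_override x f J \<in> K}"

lemma slice_insert:
  assumes "i \<notin> J" "f \<in> J \<rightarrow>\<^sub>E UNIV"
  shows "f(i := t) \<in> slice K x (insert i J) \<longleftrightarrow> f \<in> slice K (vec_upd x i t) J"
  using assms by (auto simp: slice_def vec_override_insert PiE_iff extensional_def)

lemma slice_mono: "K \<subseteq> K' \<Longrightarrow> slice K x J \<subseteq> slice K' x J"
  by (auto simp: slice_def)

lemma slice_cylinder_vec_upd:
  assumes "i \<notin> J" "t \<in> {0..1}" "u \<in> {0..1}"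
  shows "slice (cylinder K {i} \<inter> unit_cube) (vec_upd x i t) J
       = slice (cylinder K {i} \<inter> unit_cube) (vec_upd x i u) J"
proof -
  have agree: "vec_override (vec_upd x i t) f J $ j = vec_override (vec_upd x i u) f J $ j"
    if "j \<noteq> i" for f j
    using that by (simp add: vec_override_def vec_upd_def)
  have "vec_override (vec_upd x i t) f J \<in> cylinder K {i} \<longleftrightarrow> vec_override (vec_upd x i u) f J \<in> cylinder K {i}"
    for f by (rule mem_cylinder_cong) (simp add: agree)
  moreover have "vec_override (vec_upd x i t) f J \<in> unit_cube \<longleftrightarrow> vec_override (vec_upd x i u) f J \<in> unit_cube"
    for f using agree assms by (auto simp: unit_cube_def vec_override_def vec_upd_def)
  ultimately show ?thesis
    by (auto simp: slice_def)
qed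

locale unit_interval_prob = prob_space M for M :: "real measure" +
  assumes sets_eq_borel [measurable_cong]: "sets M = sets borel"
    and AE_unit_interval: "AE t in M. t \<in> {0..1}"
begin

abbreviation PM :: "'n set \<Rightarrow> ('n \<Rightarrow> real) measure" where
  "PM J \<equiv> PiM J (\<lambda>_. M)"

lemma space_eq_UNIV: "space M = UNIV"
  using sets_eq_imp_space_eq[OF sets_eq_borel] by simp

lemma prob_space_PM: "prob_space (PM J)"
  by (intro prob_space_PiM prob_space_axioms)

lemma product_sigma_finite_M: "product_sigma_finite (\<lambda>_. M)"
  by (intro product_sigma_finite.intro sigma_finite_measure_axioms)

lemma slice_eq_vimage: "slice K x J = (\<lambda>f. vec_override x f J) -` K \<inter> space (PM J)"
  by (auto simp: slice_def space_PiM space_eq_UNIV)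

lemma sets_slice [measurable]: "K \<in> sets borel \<Longrightarrow> slice K x J \<in> sets (PM J)"
  unfolding slice_eq_vimage by (rule measurable_sets[OF measurable_vec_override]) (auto simp: sets_eq_borel)

lemma indicator_slice_insert:
  assumes "i \<notin> J" "f \<in> space (PM J)"
  shows "indicator (slice K (vec_upd x i t) J) f = (indicator (slice K x (insert i J)) (f(i := t)) :: ennreal)"
  using slice_insert[OF assms(1)] assms(2) by (simp add: space_PiM space_eq_UNIV indicator_def)

lemma emeasure_slice_insert:
  assumes "finite J" "i \<notin> J" "K \<in> sets borel"
  shows "emeasure (PM (insert i J)) (slice K x (insert i J))
       = (\<integral>\<^sup>+t. emeasure (PM J) (slice K (vec_upd x i t) J) \<partial>M)"
proof -
  have "emeasure (PM (insert i J)) (slice K x (insert i J))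
      = (\<integral>\<^sup>+f. indicator (slice K x (insert i J)) f \<partial>PM (insert i J))"
    using assms by simp
  also have "\<dots> = (\<integral>\<^sup>+t. \<integral>\<^sup>+f. indicator (slice K x (insert i J)) (f(i := t)) \<partial>PM J \<partial>M)"
    using assms by (intro product_sigma_finite.product_nn_integral_insert_rev[OF product_sigma_finite_M]) simp_all
  also have "\<dots> = (\<integral>\<^sup>+t. emeasure (PM J) (slice K (vec_upd x i t) J) \<partial>M)"
    using assms by (intro nn_integral_cong) (simp add: indicator_slice_insert[symmetric] cong: nn_integral_cong)
  finally show ?thesis .
qed

lemma borel_measurable_measure_slice:
  assumes "finite J" "i \<notin> J" "K \<in> sets borel"
  shows "(\<lambda>t. measure (PM J) (slice K (vec_upd x i t) J)) \<in> borel_measurable M"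
proof -
  have "(\<lambda>(t, f). indicator (slice K x (insert i J)) (f(i := t)) :: ennreal) \<in> borel_measurable (M \<Otimes>\<^sub>M PM J)"
    using assms by measurable
  then have "(\<lambda>t. \<integral>\<^sup>+f. indicator (slice K x (insert i J)) (f(i := t)) \<partial>PM J) \<in> borel_measurable M"
    by (intro sigma_finite_measure.borel_measurable_nn_integral prob_space_imp_sigma_finite prob_space_PM)
       (simp add: case_prod_beta')
  then have "(\<lambda>t. emeasure (PM J) (slice K (vec_upd x i t) J)) \<in> borel_measurable M"
    using assms by (simp add: indicator_slice_insert[symmetric] cong: nn_integral_cong)
  then show ?thesis
    unfolding measure_def by measurable
qed

lemma integrable_measure_slice:
  assumes "finite J" "i \<notin> J" "K \<in> sets borel"
  shows "integrable M (\<lambda>t. measure (PM J) (slice K (vec_upd x i t) J))"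
proof -
  interpret PJ: prob_space "PM J" by (rule prob_space_PM)
  show ?thesis
    using assms by (intro integrable_const_bound[where B = 1] borel_measurable_measure_slice) auto
qed

lemma measure_slice_insert:
  assumes "finite J" "i \<notin> J" "K \<in> sets borel"
  shows "measure (PM (insert i J)) (slice K x (insert i J))
       = expectation (\<lambda>t. measure (PM J) (slice K (vec_upd x i t) J))"
proof -
  interpret PJ: prob_space "PM J" by (rule prob_space_PM)
  interpret PiJ: prob_space "PM (insert i J)" by (rule prob_space_PM)
  let ?a = "\<lambda>t. measure (PM J) (slice K (vec_upd x i t) J)"
  have int: "integrable M ?a"
    using assms by (rule integrable_measure_slice)
  have "ennreal (measure (PM (insert i J)) (slice K x (insert i J))) = (\<integral>\<^sup>+t. ennreal (?a t) \<partial>M)"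
    using emeasure_slice_insert[OF assms, of x] by (simp add: PJ.emeasure_eq_measure PiJ.emeasure_eq_measure)
  also have "\<dots> = ennreal (expectation ?a)"
    using int by (intro nn_integral_eq_integral) auto
  finally show ?thesis
    by (simp add: integral_nonneg)
qed

lemma nn_integral_exp_hamming_insert:
  assumes "finite J" "i \<notin> J" "compact K"
  shows "(\<integral>\<^sup>+f. exp_hamming l K (insert i J) (vec_override x f (insert i J)) \<partial>PM (insert i J))
       = (\<integral>\<^sup>+t. \<integral>\<^sup>+f. exp_hamming l K (insert i J) (vec_override (vec_upd x i t) f J) \<partial>PM J \<partial>M)"
proof -
  have "(\<lambda>f. exp_hamming l K (insert i J) (vec_override x f (insert i J))) \<in> borel_measurable (PM (insert i J))"
    by (intro measurable_compose[OF measurable_vec_override borel_measurable_exp_hamming] assms sets_eq_borel)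
  then show ?thesis
    using assms by (simp add: product_sigma_finite.product_nn_integral_insert_rev[OF product_sigma_finite_M]
        vec_override_insert)
qed

lemma nn_integral_exp_hamming_insert_le:
  assumes "finite J" "i \<notin> J" "compact K" "0 \<le> B"
    and "(\<integral>\<^sup>+f. exp_hamming l (cylinder K {i} \<inter> unit_cube) J (vec_override y f J) \<partial>PM J) \<le> ennreal B"
  shows "(\<integral>\<^sup>+f. exp_hamming l K (insert i J) (vec_override y f J) \<partial>PM J) \<le> ennreal (exp l * B)"
proof -
  have "(\<lambda>f. exp_hamming l (cylinder K {i} \<inter> unit_cube) J (vec_override y f J)) \<in> borel_measurable (PM J)"
    by (intro measurable_compose[OF measurable_vec_override borel_measurable_exp_hamming]
        compact_cylinder_Int_unit_cube assms sets_eq_borel)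
  then have "(\<integral>\<^sup>+f. exp_hamming l K (insert i J) (vec_override y f J) \<partial>PM J)
      \<le> ennreal (exp l) * (\<integral>\<^sup>+f. exp_hamming l (cylinder K {i} \<inter> unit_cube) J (vec_override y f J) \<partial>PM J)"
    using assms by (simp add: nn_integral_cmult[symmetric] nn_integral_mono exp_hamming_insert_le)
  also have "\<dots> \<le> ennreal (exp l) * ennreal B"
    using assms(5) by (rule mult_left_mono) simp
  also have "\<dots> = ennreal (exp l * B)"
    using assms(4) by (simp add: ennreal_mult)
  finally show ?thesis .
qed

lemma measure_slice_le_cylinder:
  assumes "i \<notin> J" "compact K" "K \<subseteq> unit_cube" "t \<in> {0..1}"
  shows "measure (PM J) (slice K (vec_upd x i t) J)
    \<le> measure (PM J) (slice (cylinder K {i} \<inter> unit_cube) (vec_upd x i 0) J)"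
proof -
  interpret PJ: prob_space "PM J" by (rule prob_space_PM)
  have "measure (PM J) (slice K (vec_upd x i t) J)
      \<le> measure (PM J) (slice (cylinder K {i} \<inter> unit_cube) (vec_upd x i t) J)"
    using assms subset_cylinder[of K "{i}"]
    by (intro PJ.finite_measure_mono slice_mono sets_slice borel_compact compact_cylinder_Int_unit_cube) auto
  also have "\<dots> = measure (PM J) (slice (cylinder K {i} \<inter> unit_cube) (vec_upd x i 0) J)"
    using assms by (subst slice_cylinder_vec_upd[where u = 0]) auto
  finally show ?thesis .
qed

lemma talagrand_hamming_empty:
  assumes "0 < measure (PM {}) (slice K x {})"
  shows "(\<integral>\<^sup>+f. exp_hamming l K {} (vec_override x f {}) \<partial>PM {}) \<le> ennreal (1 / measure (PM {}) (slice K x {}))"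
proof -
  interpret P0: prob_space "PM {}" by (rule prob_space_PM)
  have "x \<in> K"
    using assms by (cases "x \<in> K") (auto simp: slice_def vec_override_def vec_eq_iff)
  then have "slice K x {} = space (PM {})"
    by (auto simp: slice_def vec_override_def vec_eq_iff[symmetric] space_PiM)
  moreover have "exp_hamming l K {} (vec_override x f {}) = 1" for f
    using \<open>x \<in> K\<close> by (simp add: exp_hamming_empty vec_override_def vec_eq_iff[symmetric])
  ultimately show ?thesis
    by (simp add: P0.prob_space P0.emeasure_space_1)
qed

lemma talagrand_hamming_insert:
  assumes J: "finite J" "i \<notin> J" and K: "compact K" "K \<subseteq> unit_cube"
    and pos: "0 < measure (PM (insert i J)) (slice K x (insert i J))"
    and "0 \<le> C"
    and IH: "\<And>K x. compact K \<Longrightarrow> K \<subseteq> unit_cube \<Longrightarrow> 0 < measure (PM J) (slice K x J) \<Longrightarrow>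
      (\<integral>\<^sup>+f. exp_hamming l K J (vec_override x f J) \<partial>PM J) \<le> ennreal (C / measure (PM J) (slice K x J))"
  shows "(\<integral>\<^sup>+f. exp_hamming l K (insert i J) (vec_override x f (insert i J)) \<partial>PM (insert i J))
    \<le> ennreal (talagrand_factor l * C / measure (PM (insert i J)) (slice K x (insert i J)))"
proof -
  define K' where "K' = cylinder K {i} \<inter> unit_cube"
  define a where "a t = measure (PM J) (slice K (vec_upd x i t) J)" for t
  define \<beta> where "\<beta> = measure (PM J) (slice K' (vec_upd x i 0) J)"
  define g where "g t = (\<integral>\<^sup>+f. exp_hamming l K (insert i J) (vec_override (vec_upd x i t) f J) \<partial>PM J)" for t
  (* The induction hypothesis for K bounds g t by C / a t; the one for the i-cylinder K',
     whose sections at all t in [0, 1] coincide and have measure \<beta> \<ge> a t, bounds it by e^l C / \<beta>. *)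
  have K': "compact K'" "K' \<subseteq> unit_cube"
    using K compact_cylinder_Int_unit_cube[of K "{i}"] by (auto simp: K'_def)
  have a_le: "AE t in M. 0 \<le> a t \<and> a t \<le> \<beta>"
    using AE_unit_interval
    by eventually_elim (use J K in \<open>simp add: a_def \<beta>_def K'_def measure_slice_le_cylinder\<close>)
  have \<mu>: "measure (PM (insert i J)) (slice K x (insert i J)) = expectation a"
    unfolding a_def using J K by (intro measure_slice_insert borel_compact)
  have "expectation a \<le> \<beta>"
    using a_le J K unfolding a_def by (intro integral_le_const integrable_measure_slice borel_compact) auto
  then have \<beta>: "0 < \<beta>"
    using pos \<mu> by linarith
  have "AE t in M. g t \<le> ennreal (exp l * C / \<beta>)"
    using AE_unit_interval
  proof eventually_elim
    case (elim t)
    have "slice K' (vec_upd x i t) J = slice K' (vec_upd x i 0) J"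
      unfolding K'_def using J(2) elim by (intro slice_cylinder_vec_upd) auto
    then have "(\<integral>\<^sup>+f. exp_hamming l K' J (vec_override (vec_upd x i t) f J) \<partial>PM J) \<le> ennreal (C / \<beta>)"
      using IH[OF K', of "vec_upd x i t"] \<beta> by (simp add: \<beta>_def)
    then have "g t \<le> ennreal (exp l * (C / \<beta>))"
      unfolding g_def K'_def using J K \<open>0 \<le> C\<close> \<beta> by (intro nn_integral_exp_hamming_insert_le) auto
    then show ?case
      by simp
  qed
  moreover have "AE t in M. 0 < a t \<longrightarrow> g t \<le> ennreal (C / a t)"
  proof (intro AE_I2 impI)
    fix t assume "0 < a t"
    have "g t \<le> (\<integral>\<^sup>+f. exp_hamming l K J (vec_override (vec_upd x i t) f J) \<partial>PM J)"
      unfolding g_def by (intro nn_integral_mono exp_hamming_antimono) auto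
    also have "\<dots> \<le> ennreal (C / a t)"
      using IH[OF K] \<open>0 < a t\<close> by (simp add: a_def)
    finally show "g t \<le> ennreal (C / a t)" .
  qed
  moreover have "a \<in> borel_measurable M"
    unfolding a_def using J K by (intro borel_measurable_measure_slice borel_compact)
  ultimately have "(\<integral>\<^sup>+t. g t \<partial>M) \<le> ennreal (talagrand_factor l * C / expectation a)"
    using a_le pos \<mu> \<open>0 \<le> C\<close> by (intro nn_integral_le_talagrand_factor) auto
  then show ?thesis
    unfolding \<mu> g_def nn_integral_exp_hamming_insert[OF J K(1)] .
qed

theorem talagrand_hamming:
  assumes "finite J" "compact K" "K \<subseteq> unit_cube" "0 < measure (PM J) (slice K x J)"
  shows "(\<integral>\<^sup>+f. exp_hamming l K J (vec_override x f J) \<partial>PM J)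
    \<le> ennreal (talagrand_factor l ^ card J / measure (PM J) (slice K x J))"
  using assms
proof (induction J arbitrary: K x rule: finite_induct)
  case empty
  then show ?case
    using talagrand_hamming_empty by simp
next
  case (insert i J)
  then show ?case
    using talagrand_hamming_insert[of J i K x "talagrand_factor l ^ card J" l]
    by (simp add: talagrand_factor_nonneg mult.assoc)
qed

end

section \<open>The uniform measure on the cube\<close>

lemma unit_interval_prob_uniform: "unit_interval_prob (uniform_measure lborel {0..1::real})"
  by (intro unit_interval_prob.intro unit_interval_prob_axioms.intro prob_space_uniform_measure
      AE_uniform_measureI) auto

lemma lborel_eq_distr_vec_lambda:
  "distr (PiM UNIV (\<lambda>_::'n. lborel)) borel vec_lambda = (lborel :: (real ^ 'n::finite) measure)"
proof (rule lborel_eqI[symmetric])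
  let ?L = "PiM UNIV (\<lambda>_::'n. lborel)"
  fix l u :: "real ^ 'n"
  assume lu: "\<And>b. b \<in> Basis \<Longrightarrow> l \<bullet> b \<le> u \<bullet> b"
  then have lu': "l $ j \<le> u $ j" for j
    by (auto simp: Basis_vec_def cart_eq_inner_axis)
  have meas: "(vec_lambda :: ('n \<Rightarrow> real) \<Rightarrow> real ^ 'n) \<in> borel_measurable ?L"
    using measurable_vec_override[of UNIV "\<lambda>_. lborel" 0] by (simp add: vec_override_UNIV)
  have "vec_lambda -` box l u \<inter> space ?L = PiE UNIV (\<lambda>j. {l $ j<..<u $ j})"
    by (auto simp: space_PiM mem_box_cart PiE_iff)
  then have "emeasure (distr ?L borel vec_lambda) (box l u) = (\<Prod>j\<in>UNIV. emeasure lborel {l $ j<..<u $ j})"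
    using meas by (simp add: emeasure_distr product_sigma_finite.emeasure_PiM
        product_sigma_finite.intro sigma_finite_lborel)
  also have "\<dots> = ennreal (\<Prod>j\<in>UNIV. u $ j - l $ j)"
    using lu' by (simp add: prod_ennreal)
  also have "(\<Prod>j\<in>UNIV. u $ j - l $ j) = (\<Prod>b\<in>Basis. (u - l) \<bullet> b)"
    using lu' lu by (simp add: content_cbox_cart[symmetric] interval_ne_empty_cart content_cbox inner_diff_left)
  finally show "emeasure (distr ?L borel vec_lambda) (box l u) = ennreal (\<Prod>b\<in>Basis. (u - l) \<bullet> b)" .
qed simp

lemma PiM_uniform_measure_unit_interval:
  assumes "finite I"
  shows "PiM I (\<lambda>_. uniform_measure lborel {0..1::real})
       = uniform_measure (PiM I (\<lambda>_. lborel)) (PiE I (\<lambda>_. {0..1}))"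
proof (rule product_sigma_finite.PiM_eqI[symmetric])
  show "product_sigma_finite (\<lambda>_::'a. uniform_measure lborel {0..1::real})"
    by (rule unit_interval_prob.product_sigma_finite_M[OF unit_interval_prob_uniform])
  show "sets (uniform_measure (PiM I (\<lambda>_. lborel)) (PiE I (\<lambda>_. {0..1}))) = sets (PiM I (\<lambda>_. uniform_measure lborel {0..1::real}))"
    by (simp cong: sets_PiM_cong)
next
  fix A :: "'a \<Rightarrow> real set"
  assume A: "\<And>i. i \<in> I \<Longrightarrow> A i \<in> sets (uniform_measure lborel {0..1})"
  have L: "emeasure (PiM I (\<lambda>_. lborel)) (PiE I B) = (\<Prod>i\<in>I. emeasure lborel (B i))"
    if "\<And>i. i \<in> I \<Longrightarrow> B i \<in> sets borel" for B
    using that assms by (intro product_sigma_finite.emeasure_PiM product_sigma_finite.intro sigma_finite_lborel) auto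
  have "PiE I (\<lambda>_. {0..1::real}) \<inter> PiE I A = PiE I (\<lambda>i. {0..1} \<inter> A i)"
    by (auto simp: PiE_iff)
  then show "emeasure (uniform_measure (PiM I (\<lambda>_. lborel)) (PiE I (\<lambda>_. {0..1}))) (PiE I A)
      = (\<Prod>i\<in>I. emeasure (uniform_measure lborel {0..1}) (A i))"
    using A assms by (simp add: L sets_PiM_I_finite divide_ennreal_def)
qed (use assms in simp)

lemma emeasure_slice_uniform:
  fixes E :: "(real ^ 'n) set"
  assumes "E \<in> sets borel" "E \<subseteq> unit_cube"
  shows "emeasure (PiM UNIV (\<lambda>_. uniform_measure lborel {0..1})) (slice E x UNIV) = emeasure lborel E"
proof -
  let ?L = "PiM UNIV (\<lambda>_::'n. lborel)" and ?Q = "PiE UNIV (\<lambda>_::'n. {0..1::real})"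
  have meas: "(vec_lambda :: ('n \<Rightarrow> real) \<Rightarrow> real ^ 'n) \<in> borel_measurable ?L"
    using measurable_vec_override[of UNIV "\<lambda>_. lborel" 0] by (simp add: vec_override_UNIV)
  have slice: "slice E x UNIV = vec_lambda -` E \<inter> space ?L"
    by (auto simp: slice_def vec_override_UNIV space_PiM)
  have sets: "slice E x UNIV \<in> sets ?L"
    unfolding slice using meas assms(1) by measurable
  have "slice E x UNIV \<subseteq> ?Q"
    using assms(2) by (auto simp: slice_def vec_override_UNIV unit_cube_def PiE_iff)
  then have "?Q \<inter> slice E x UNIV = slice E x UNIV"
    by blast
  moreover have "emeasure ?L ?Q = 1"
    by (simp add: product_sigma_finite.emeasure_PiM product_sigma_finite.intro sigma_finite_lborel)
  ultimately have "emeasure (PiM UNIV (\<lambda>_. uniform_measure lborel {0..1})) (slice E x UNIV) = emeasure ?L (slice E x UNIV)"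
    using sets by (simp add: PiM_uniform_measure_unit_interval sets_PiM_I_finite divide_ennreal_def)
  also have "\<dots> = emeasure (distr ?L borel vec_lambda) E"
    unfolding slice using meas assms(1) by (simp add: emeasure_distr)
  finally show ?thesis
    by (simp add: lborel_eq_distr_vec_lambda)
qed

abbreviation cube_uniform :: "('n \<Rightarrow> real) measure" where
  "cube_uniform \<equiv> PiM UNIV (\<lambda>_. uniform_measure lborel {0..1})"

lemma measure_slice_uniform:
  "E \<in> sets borel \<Longrightarrow> E \<subseteq> unit_cube \<Longrightarrow> measure cube_uniform (slice E x UNIV) = measure lborel E"
  by (simp add: measure_def emeasure_slice_uniform)

section \<open>Concentration of measure\<close>

(* Markov's inequality for exp (l * d); l = 2 s / n minimises the resulting bound exp (n l^2 / 4 - l s). *)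
lemma measure_exp_hamming_tail:
  fixes T :: "(real ^ 'n) set"
  assumes T: "compact T" "T \<subseteq> unit_cube" "0 < measure lborel T" and "0 < s"
  defines "l \<equiv> 2 * s / CARD('n)"
  shows "measure cube_uniform {f \<in> space cube_uniform. ennreal (exp (l * s)) \<le> exp_hamming l T UNIV (vec_lambda f)}
    \<le> exp (- (s\<^sup>2) / CARD('n)) / measure lborel T"
proof -
  interpret U: unit_interval_prob "uniform_measure lborel {0..1::real}"
    by (rule unit_interval_prob_uniform)
  interpret P: prob_space "cube_uniform :: ('n \<Rightarrow> real) measure"
    by (rule U.prob_space_PM)
  define u where "u f = exp_hamming l T UNIV (vec_lambda f)" for f :: "'n \<Rightarrow> real"
  define Bad where "Bad = {f \<in> space cube_uniform. ennreal (exp (l * s)) \<le> u f}"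
  have "u \<in> borel_measurable cube_uniform"
    unfolding u_def vec_override_UNIV[symmetric, where x = 0]
    by (intro measurable_compose[OF measurable_vec_override borel_measurable_exp_hamming] T U.sets_eq_borel)
  then have "Bad \<in> sets cube_uniform"
    unfolding Bad_def by measurable
  then have "ennreal (exp (l * s)) * emeasure cube_uniform Bad
      = (\<integral>\<^sup>+f. ennreal (exp (l * s)) * indicator Bad f \<partial>cube_uniform)"
    by (simp add: nn_integral_cmult_indicator)
  also have "\<dots> \<le> (\<integral>\<^sup>+f. u f \<partial>cube_uniform)"
    by (intro nn_integral_mono) (auto simp: Bad_def indicator_def)
  also have "\<dots> \<le> ennreal (talagrand_factor l ^ CARD('n) / measure lborel T)"
    using U.talagrand_hamming[of UNIV T 0 l] T measure_slice_uniform[of T]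
    by (simp add: u_def vec_override_UNIV borel_compact)
  finally have "exp (l * s) * measure cube_uniform Bad \<le> talagrand_factor l ^ CARD('n) / measure lborel T"
    using T(3) by (simp add: P.emeasure_eq_measure ennreal_mult[symmetric] talagrand_factor_nonneg)
  then have "measure cube_uniform Bad \<le> talagrand_factor l ^ CARD('n) * exp (- l * s) / measure lborel T"
    using T(3) by (simp add: exp_minus field_simps)
  also have "\<dots> \<le> exp (- (s\<^sup>2) / CARD('n)) / measure lborel T"
    using talagrand_factor_power_le[of s "CARD('n)"] \<open>0 < s\<close> T(3)
    by (intro divide_right_mono) (simp_all add: l_def)
  finally show ?thesis
    by (simp add: Bad_def u_def)
qed

lemma hamming_nbhd_concentration_compact:
  fixes T :: "(real ^ 'n) set"
  assumes T: "compact T" "T \<subseteq> unit_cube" "0 < measure lborel T" and "0 \<le> s"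
  shows "1 - exp (- (s\<^sup>2) / CARD('n)) / measure lborel T \<le> measure lborel (unit_cube \<inter> hamming_nbhd T s)"
proof (cases "s = 0")
  case True
  then show ?thesis
    using one_minus_inverse_le[OF T(3)] T(2) by (simp add: hamming_nbhd_0 Int_absorb1)
next
  case False
  then have s: "0 < s"
    using \<open>0 \<le> s\<close> by simp
  interpret U: unit_interval_prob "uniform_measure lborel {0..1::real}"
    by (rule unit_interval_prob_uniform)
  interpret P: prob_space "cube_uniform :: ('n \<Rightarrow> real) measure"
    by (rule U.prob_space_PM)
  define l where "l = 2 * s / CARD('n)"
  define Bad where "Bad = {f \<in> space (cube_uniform :: ('n \<Rightarrow> real) measure).
    ennreal (exp (l * s)) \<le> exp_hamming l T UNIV (vec_lambda f)}"
  have "(\<lambda>f. exp_hamming l T UNIV (vec_lambda f)) \<in> borel_measurable (cube_uniform :: ('n \<Rightarrow> real) measure)"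
    unfolding vec_override_UNIV[symmetric, where x = 0]
    by (intro measurable_compose[OF measurable_vec_override borel_measurable_exp_hamming] T U.sets_eq_borel)
  then have Bad: "Bad \<in> sets cube_uniform"
    unfolding Bad_def by measurable
  have "closed (unit_cube \<inter> hamming_nbhd T s)"
    using T by (intro closed_Int closed_hamming_nbhd compact_imp_closed compact_unit_cube)
  then have borel: "unit_cube \<in> sets borel" "unit_cube \<inter> hamming_nbhd T s \<in> sets borel"
    by (simp_all add: borel_compact compact_unit_cube borel_closed)
  have "0 < l"
    using s by (simp add: l_def)
  then have "slice unit_cube (0 :: real ^ 'n) UNIV - Bad \<subseteq> slice (unit_cube \<inter> hamming_nbhd T s) 0 UNIV"
    using exp_hamming_outside_hamming_nbhd[of l _ T s]
    by (auto simp: slice_def Bad_def vec_override_UNIV space_PiM U.space_eq_UNIV)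
  then have "measure cube_uniform (slice unit_cube (0 :: real ^ 'n) UNIV)
      \<le> measure cube_uniform (slice (unit_cube \<inter> hamming_nbhd T s) 0 UNIV \<union> Bad)"
    using borel Bad by (intro P.finite_measure_mono) (auto intro: U.sets_slice)
  also have "\<dots> \<le> measure cube_uniform (slice (unit_cube \<inter> hamming_nbhd T s) 0 UNIV) + measure cube_uniform Bad"
    using borel Bad by (intro measure_Un_le U.sets_slice)
  finally have "1 \<le> measure lborel (unit_cube \<inter> hamming_nbhd T s) + measure cube_uniform Bad"
    by (simp add: measure_slice_uniform[OF borel(1) order_refl] measure_slice_uniform[OF borel(2)] measure_unit_cube)
  then show ?thesis
    using measure_exp_hamming_tail[OF T s] by (simp add: Bad_def l_def)
qed

lemma lebesgue_inner_compact_seq: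
  fixes A :: "'a::euclidean_space set"
  assumes "A \<in> sets lebesgue" "bounded A"
  obtains T where "\<And>m. compact (T m)" "\<And>m. T m \<subseteq> A"
    "(\<lambda>m. measure lebesgue (T m)) \<longlonglongrightarrow> measure lebesgue A"
proof -
  have A: "A \<in> lmeasurable"
    using assms by (rule bounded_set_imp_lmeasurable[rotated])
  have "\<exists>T. closed T \<and> T \<subseteq> A \<and> measure lebesgue A - inverse (Suc m) < measure lebesgue T" for m
  proof -
    obtain T where T: "closed T" "T \<subseteq> A" "A - T \<in> lmeasurable"
      "emeasure lebesgue (A - T) < ennreal (inverse (Suc m))"
      using sets_lebesgue_inner_closed[OF assms(1), of "inverse (Suc m)"] by auto
    then have "measure lebesgue (A - T) < inverse (Suc m)"
      unfolding emeasure_eq_measure2[OF T(3)] by (subst (asm) ennreal_less_iff) auto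
    moreover have "measure lebesgue (A - T) = measure lebesgue A - measure lebesgue T"
      using A T(1,2) by (intro measurable_measure_Diff) (auto simp: borel_closed)
    ultimately show ?thesis
      using T by auto
  qed
  then obtain T where T: "\<And>m. closed (T m)" "\<And>m. T m \<subseteq> A"
    "\<And>m. measure lebesgue A - inverse (Suc m) < measure lebesgue (T m)"
    by metis
  have le: "measure lebesgue (T m) \<le> measure lebesgue A" for m
    using A T(1,2) by (intro measure_mono_fmeasurable) (auto simp: borel_closed)
  have lim: "(\<lambda>m. measure lebesgue A - inverse (Suc m)) \<longlonglongrightarrow> measure lebesgue A"
    using tendsto_diff[OF tendsto_const LIMSEQ_inverse_real_of_nat] by simp
  have "eventually (\<lambda>m. measure lebesgue A - inverse (Suc m) \<le> measure lebesgue (T m)) sequentially"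
    by (intro always_eventually allI less_imp_le T(3))
  moreover have "eventually (\<lambda>m. measure lebesgue (T m) \<le> measure lebesgue A) sequentially"
    by (intro always_eventually allI le)
  ultimately have "(\<lambda>m. measure lebesgue (T m)) \<longlonglongrightarrow> measure lebesgue A"
    using lim by (rule tendsto_sandwich) simp
  moreover have "compact (T m)" for m
    using bounded_subset[OF assms(2) T(2)] T(1) by (simp add: compact_eq_bounded_closed)
  ultimately show ?thesis
    using that T(2) by blast
qed

lemma hamming_nbhd_concentration:
  fixes A :: "(real ^ 'n) set"
  assumes A: "A \<subseteq> unit_cube" "A \<in> sets lebesgue" "0 < measure lebesgue A" and "0 \<le> s"
  shows "\<exists>C\<in>sets lebesgue. C \<subseteq> unit_cube \<inter> hamming_nbhd A s \<and>
    1 - exp (- (s\<^sup>2) / CARD('n)) / measure lebesgue A \<le> measure lebesgue C"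
proof -
  define Q where "Q = exp (- (s\<^sup>2) / CARD('n))"
  have "bounded A"
    using A(1) unfolding unit_cube_eq_cbox by (rule bounded_subset[OF bounded_cbox])
  then obtain T where T: "\<And>m. compact (T m)" "\<And>m. T m \<subseteq> A"
    "(\<lambda>m. measure lebesgue (T m)) \<longlonglongrightarrow> measure lebesgue A"
    using lebesgue_inner_compact_seq[OF A(2)] by blast
  define C where "C = (\<Union>m. unit_cube \<inter> hamming_nbhd (T m) s)"
  have closed_m: "closed (unit_cube \<inter> hamming_nbhd (T m) s)" for m
    using T(1) by (intro closed_Int closed_hamming_nbhd compact_imp_closed compact_unit_cube)
  have C_borel: "C \<in> sets borel"
    unfolding C_def using closed_m by (intro sets.countable_UN) (auto intro: borel_closed)
  have C_sub: "C \<subseteq> unit_cube \<inter> hamming_nbhd A s"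
    unfolding C_def using T(2) hamming_nbhd_mono by blast
  have "C \<in> lmeasurable"
    using C_borel C_sub bounded_subset[OF bounded_cbox] by (intro bounded_set_imp_lmeasurable) (auto simp: unit_cube_eq_cbox)
  then have C_ge: "measure lebesgue (unit_cube \<inter> hamming_nbhd (T m) s) \<le> measure lebesgue C" for m
    unfolding C_def using closed_m by (intro measure_mono_fmeasurable) (auto intro: borel_closed)
  have "eventually (\<lambda>m. 0 < measure lebesgue (T m)) sequentially"
    using order_tendstoD(1)[OF T(3) A(3)] .
  then have ev: "eventually (\<lambda>m. 1 - Q / measure lebesgue (T m) \<le> measure lebesgue C) sequentially"
  proof eventually_elim
    case (elim m)
    have eq: "measure lebesgue (T m) = measure lborel (T m)"
      "measure lebesgue (unit_cube \<inter> hamming_nbhd (T m) s) = measure lborel (unit_cube \<inter> hamming_nbhd (T m) s)"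
      using T(1) closed_m by (simp_all add: measure_completion borel_compact borel_closed)
    have "T m \<subseteq> unit_cube"
      using T(2) A(1) by blast
    then have "1 - Q / measure lborel (T m) \<le> measure lborel (unit_cube \<inter> hamming_nbhd (T m) s)"
      using hamming_nbhd_concentration_compact[OF T(1)] elim eq \<open>0 \<le> s\<close> by (simp add: Q_def)
    then show ?case
      using eq C_ge[of m] by simp
  qed
  have "(\<lambda>m. 1 - Q / measure lebesgue (T m)) \<longlonglongrightarrow> 1 - Q / measure lebesgue A"
    using A(3) by (intro tendsto_intros T(3)) simp
  then have "1 - Q / measure lebesgue A \<le> measure lebesgue C"
    using ev trivial_limit_sequentially by (rule tendsto_upperbound)
  moreover have "C \<in> sets lebesgue"
    using C_borel by simp
  ultimately show ?thesis
    using C_sub unfolding Q_def by blast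
qed

section \<open>From the Hamming distance to d_p\<close>

lemma pnorm_diff_le_card_powr:
  fixes y z :: "real ^ 'n"
  assumes "y \<in> unit_cube" "z \<in> unit_cube" "0 < p"
  shows "pnorm p (z - y) \<le> real (card {j. z $ j \<noteq> y $ j}) powr (1 / p)"
proof -
  have "(\<Sum>j\<in>UNIV. \<bar>(z - y) $ j\<bar> powr p) = (\<Sum>j\<in>{j. z $ j \<noteq> y $ j}. \<bar>(z - y) $ j\<bar> powr p)"
    by (rule sum.mono_neutral_right) auto
  also have "\<dots> \<le> (\<Sum>j\<in>{j. z $ j \<noteq> y $ j}. 1)"
  proof (rule sum_mono)
    fix j
    have "0 \<le> y $ j" "y $ j \<le> 1" "0 \<le> z $ j" "z $ j \<le> 1"
      using assms(1,2) by (auto simp: unit_cube_def)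
    then have "\<bar>(z - y) $ j\<bar> \<le> 1"
      by simp
    then show "\<bar>(z - y) $ j\<bar> powr p \<le> 1"
      using powr_mono2[of p "\<bar>(z - y) $ j\<bar>" 1] assms(3) by simp
  qed
  finally show ?thesis
    using assms(3) by (auto simp: pnorm_def intro!: powr_mono2 sum_nonneg)
qed

lemma hamming_nbhd_subset_expansion:
  assumes "A \<subseteq> unit_cube" "0 < p" "0 \<le> eps"
  shows "unit_cube \<inter> hamming_nbhd A (eps powr p) \<subseteq> expansion A eps p"
proof
  fix z assume z: "z \<in> unit_cube \<inter> hamming_nbhd A (eps powr p)"
  then obtain y where y: "y \<in> A" "real (card {j. z $ j \<noteq> y $ j}) \<le> eps powr p"
    by (auto elim: hamming_nbhdE)
  have "dist_p p z y \<le> real (card {j. z $ j \<noteq> y $ j}) powr (1 / p)"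
    unfolding dist_p_def using y(1) z assms(1,2) by (intro pnorm_diff_le_card_powr) auto
  also have "\<dots> \<le> (eps powr p) powr (1 / p)"
    using y(2) assms(2) by (intro powr_mono2) auto
  also have "\<dots> = eps"
    using assms(2,3) by (simp add: powr_powr)
  finally show "z \<in> expansion A eps p"
    using y(1) z by (auto simp: expansion_def)
qed

lemma hamming_nbhd_subset_expansion_0: "unit_cube \<inter> hamming_nbhd A eps \<subseteq> expansion A eps 0"
proof
  fix z assume z: "z \<in> unit_cube \<inter> hamming_nbhd A eps"
  then obtain y where "y \<in> A" "real (card {j. z $ j \<noteq> y $ j}) \<le> eps"
    by (auto elim: hamming_nbhdE)
  moreover have "{j. (z - y) $ j \<noteq> 0} = {j. z $ j \<noteq> y $ j}"
    by auto
  ultimately show "z \<in> expansion A eps 0"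
    using z by (auto simp: expansion_def dist_p_def pnorm_def)
qed

theorem lemma4:
  fixes A :: "(real ^ 'n) set" and p eps :: real
  assumes "A \<subseteq> unit_cube"
    and "A \<in> sets lebesgue"
    and "measure lebesgue A > 0"
    and "p \<ge> 0"
    and "eps \<ge> 0"
  shows "(p > 0 \<longrightarrow> (\<exists>C\<in>sets lebesgue. C \<subseteq> expansion A eps p \<and>
            measure lebesgue C \<ge> 1 - exp (- (eps powr (2 * p)) / real CARD('n)) / measure lebesgue A))
       \<and> (p = 0 \<longrightarrow> (\<exists>C\<in>sets lebesgue. C \<subseteq> expansion A eps p \<and>
            measure lebesgue C \<ge> 1 - exp (- (eps ^ 2) / real CARD('n)) / measure lebesgue A))"
proof (intro conjI impI)
  assume "p > 0"
  have "eps powr (2 * p) = (eps powr p)\<^sup>2"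
    by (simp add: power2_eq_square powr_add[symmetric])
  then show "\<exists>C\<in>sets lebesgue. C \<subseteq> expansion A eps p \<and>
      measure lebesgue C \<ge> 1 - exp (- (eps powr (2 * p)) / real CARD('n)) / measure lebesgue A"
    using hamming_nbhd_concentration[OF assms(1-3), of "eps powr p"]
      hamming_nbhd_subset_expansion[OF assms(1) \<open>p > 0\<close> assms(5)]
    by auto
next
  assume "p = 0"
  then show "\<exists>C\<in>sets lebesgue. C \<subseteq> expansion A eps p \<and>
      measure lebesgue C \<ge> 1 - exp (- (eps ^ 2) / real CARD('n)) / measure lebesgue A"
    using hamming_nbhd_concentration[OF assms(1-3,5)] hamming_nbhd_subset_expansion_0[of A eps]
    by auto
qed

end
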